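(* Let $M$ and $N$ be arbitrary discrete measure spaces, i.e. sets with all subsets measurable and measures $\mu,\nu$ given by positive masses $\mu_i=\mu(\{i\})>0$ ($i\in M$), $\nu_j=\nu(\{j\})>0$ ($j\in N$). Let $t>0$, $1\le q<p\le\infty$, $\alpha=1/q-1/p$, $C(p,q)=(1-q/p)^{1/q}$. For $a:M\times N\to\mathbb R$ let $\|a\|$ be the $L^{p,\infty}(\mu)$ quasi-norm of $i\mapsto\big(\sum_{j\in N}|a(i,j)|^q\nu_j\big)^{1/q}$ (the norm of $\ell^{p,\infty}_M(\ell^q_N)$), $\|a\|^{\top}$ the $L^{p,\infty}(\nu)$ quasi-norm of $j\mapsto\big(\sum_{i\in M}|a(i,j)|^q\mu_i\big)^{1/q}$ (the norm of $\ell^{p,\infty}_N(\ell^q_M)$ applied to the transpose), and $$|||a|||_{p,q,t}=\sup_{E,F}\big(\mu(E)^{\alpha}\vee t^{-1}\nu(F)^{\alpha}\big)^{-1}\Big(\sum_{(i,j)\in E\times F}|a(i,j)|^q\mu_i\nu_j\Big)^{1/q},$$ the supremum over $E\subset M$, $F\subset N$ of positive finite measure. Let $K_{p,q,t}(a)=\inf\{\|b\|+t\|c\|^{\top}: a=b+c\}$. Then for every $a$, $$C(p,q)\,|||a|||_{p,q,t}\le K_{p,q,t}(a)\le 2\,|||a|||_{p,q,t}.$$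
   Context: For a nonnegative function $g$ on a measure space, $g^*(s)=\inf\{\lambda>0:\text{measure}\{g>\lambda\}\le s\}$ and $\|g\|_{L^{p,\infty}}=\sup_{s>0}s^{1/p}g^*(s)$ (the sup norm when $p=\infty$). $u\vee v=\max(u,v)$. *)

theory Defs
  imports "HOL-Analysis.Analysis"
begin

definition disc_measure :: "('a \<Rightarrow> real) \<Rightarrow> 'a measure" where
  "disc_measure w = density (count_space UNIV) (\<lambda>i. ennreal (w i))"

definition epow :: "ennreal \<Rightarrow> real \<Rightarrow> ennreal" where
  "epow x r = (if x = \<infinity> then \<infinity> else ennreal (enn2real x powr r))"

definition rearr :: "'a measure \<Rightarrow> ('a \<Rightarrow> ennreal) \<Rightarrow> real \<Rightarrow> ennreal" where
  "rearr M g s = Inf {l. 0 < l \<and> emeasure M {x \<in> space M. g x > l} \<le> ennreal s}"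

definition weak_norm :: "'a measure \<Rightarrow> ennreal \<Rightarrow> ('a \<Rightarrow> ennreal) \<Rightarrow> ennreal" where
  "weak_norm M p g = (if p = \<infinity> then (SUP x\<in>space M. g x)
     else (SUP s\<in>{0<..}. ennreal (s powr (1 / enn2real p)) * rearr M g s))"

definition mixed_norm :: "('m \<Rightarrow> real) \<Rightarrow> ('n \<Rightarrow> real) \<Rightarrow> ennreal \<Rightarrow> real
    \<Rightarrow> ('m \<Rightarrow> 'n \<Rightarrow> real) \<Rightarrow> ennreal" where
  "mixed_norm \<mu> \<nu> p q a = weak_norm (disc_measure \<mu>) p
     (\<lambda>i. epow (\<integral>\<^sup>+ j. ennreal (\<bar>a i j\<bar> powr q) \<partial>disc_measure \<nu>) (1 / q))"

definition triple_norm :: "('m \<Rightarrow> real) \<Rightarrow> ('n \<Rightarrow> real) \<Rightarrow> ennreal \<Rightarrow> real \<Rightarrow> real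
    \<Rightarrow> ('m \<Rightarrow> 'n \<Rightarrow> real) \<Rightarrow> ennreal" where
  "triple_norm \<mu> \<nu> p q t a =
    (let \<alpha> = 1 / q - enn2real (inverse p) in
     SUP EF\<in>{(E, F). 0 < emeasure (disc_measure \<mu>) E \<and> emeasure (disc_measure \<mu>) E < \<infinity>
                  \<and> 0 < emeasure (disc_measure \<nu>) F \<and> emeasure (disc_measure \<nu>) F < \<infinity>}.
       ennreal (1 / max (measure (disc_measure \<mu>) (fst EF) powr \<alpha>)
                        (measure (disc_measure \<nu>) (snd EF) powr \<alpha> / t))
       * epow (\<integral>\<^sup>+ i\<in>fst EF. (\<integral>\<^sup>+ j\<in>snd EF. ennreal (\<bar>a i j\<bar> powr q) \<partial>disc_measure \<nu>)
                 \<partial>disc_measure \<mu>) (1 / q))"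

definition K_func :: "('m \<Rightarrow> real) \<Rightarrow> ('n \<Rightarrow> real) \<Rightarrow> ennreal \<Rightarrow> real \<Rightarrow> real
    \<Rightarrow> ('m \<Rightarrow> 'n \<Rightarrow> real) \<Rightarrow> ennreal" where
  "K_func \<mu> \<nu> p q t a =
    (INF bc\<in>{(b, c). \<forall>i j. a i j = b i j + c i j}.
       mixed_norm \<mu> \<nu> p q (fst bc) + ennreal t * mixed_norm \<nu> \<mu> p q (\<lambda>j i. snd bc i j))"

end

theory Submission
  imports Defs
begin

text \<open>
  On a discrete space with positive masses the weak-type quasi-norm is governed by finite sets:
  ||g||_(p,\<infinity>) \<le> A iff every finite nonempty E contains a point i with \<mu>(E)^(1/p) g(i) \<le> A.
  This turns both inequalities into statements about finite sums. Write h = q/p.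

  Let a = b + c. On a block E \<times> F the q-th power mass of b is at most
  ||b||^q \<mu>(E)^(1-h) / (1-h): remove, one at a time, the point of E supplied by the weak-type
  bound and use the concavity of x^(1-h). The same holds for the transpose of c, and Minkowski's
  inequality in L^q(E \<times> F) combines the two, losing the factor (1-h)^(1/q).

  If |||a||| \<le> A, every finite block E \<times> F carries mass at most
  max (A^q \<mu>(E)^(1-h)) ((A/t)^q \<nu>(F)^(1-h)), so one of its rows or columns is light. Giving
  light rows to b and light columns to c, one at a time, splits any finite block so that b obeys
  the weak-type row bound with constant A and c the column bound with constant A/t. Compactness of
  {0,1}^(M \<times> N) glues these finite splittings into a global one, whence K \<le> A + t (A/t) = 2A.
\<close>

section \<open>Discrete measures\<close>

lemma sum_le_nn_integral_count_space:
  fixes g :: "'a \<Rightarrow> ennreal"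
  assumes "finite F" "F \<subseteq> A"
  shows "sum g F \<le> (\<integral>\<^sup>+x. g x \<partial>count_space A)"
proof -
  have "sum g F = (\<integral>\<^sup>+x. g x \<partial>count_space F)"
    using assms by (simp add: nn_integral_count_space_finite)
  also have "\<dots> \<le> (\<integral>\<^sup>+x. g x \<partial>count_space A)"
    using assms(2) by (subst (1 2) nn_integral_count_space_indicator)
      (auto intro!: nn_integral_mono simp: indicator_def)
  finally show ?thesis .
qed

lemma nn_integral_count_space_le:
  fixes g :: "'a \<Rightarrow> ennreal"
  assumes bound: "\<And>F. finite F \<Longrightarrow> F \<subseteq> A \<Longrightarrow> sum g F \<le> B"
  shows "(\<integral>\<^sup>+x. g x \<partial>count_space A) \<le> B"
proof (cases "B = \<infinity>")
  case False
  then obtain b where B: "B = ennreal b" and "b \<ge> 0" by (cases B) auto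
  define g' where "g' x = enn2real (g x * indicator A x)" for x
  have g: "g x * indicator A x = ennreal (g' x)" for x
    using bound[of "{x}"] False by (cases "x \<in> A"; cases "g x") (auto simp: g'_def top_unique)
  have sums: "ennreal (sum g' F) \<le> B" if "finite F" for F
  proof -
    have "ennreal (sum g' F) = (\<Sum>x\<in>F. g x * indicator A x)"
      using g by (simp add: sum_ennreal[symmetric] g'_def)
    also have "\<dots> = sum g (F \<inter> A)"
      using that by (simp add: sum.inter_restrict indicator_def of_bool_def if_distrib cong: if_cong)
    also have "\<dots> \<le> B" using that by (intro bound) auto
    finally show ?thesis .
  qed
  then have summable: "Infinite_Set_Sum.abs_summable_on g' UNIV"
    using B \<open>b \<ge> 0\<close> by (intro abs_summable_finite_sumsI[where B=b]) (auto simp: g'_def)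
  have "(\<integral>\<^sup>+x. g x \<partial>count_space A) = (\<integral>\<^sup>+x. ennreal (g' x) \<partial>count_space UNIV)"
    by (simp add: nn_integral_count_space_indicator g)
  also have "\<dots> = (SUP F\<in>{F. finite F \<and> F \<subseteq> UNIV}. ennreal (sum g' F))"
    using summable by (simp add: nn_integral_conv_infsetsum g'_def infsetsum_nonneg_is_SUPREMUM_ennreal)
  also have "\<dots> \<le> B" using sums by (intro SUP_least) auto
  finally show ?thesis .
qed simp

lemma space_disc_measure [simp]: "space (disc_measure w) = UNIV"
  by (simp add: disc_measure_def)

lemma nn_integral_disc_measure:
  "(\<integral>\<^sup>+x. f x \<partial>disc_measure w) = (\<integral>\<^sup>+x. ennreal (w x) * f x \<partial>count_space UNIV)"
  unfolding disc_measure_def by (rule nn_integral_density) auto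

lemma set_nn_integral_disc_measure:
  "(\<integral>\<^sup>+x\<in>E. f x \<partial>disc_measure w) = (\<integral>\<^sup>+x. ennreal (w x) * f x \<partial>count_space E)"
  by (simp add: nn_integral_disc_measure nn_integral_count_space_indicator mult.assoc)

lemma emeasure_disc_measure:
  "emeasure (disc_measure w) E = (\<integral>\<^sup>+x. ennreal (w x) \<partial>count_space E)"
  unfolding disc_measure_def by (simp add: emeasure_density nn_integral_count_space_indicator)

lemma emeasure_disc_measure_finite:
  assumes "finite E" "\<And>x. w x \<ge> 0"
  shows "emeasure (disc_measure w) E = ennreal (sum w E)"
  using assms by (simp add: emeasure_disc_measure nn_integral_count_space_finite)

lemma measure_disc_measure_finite:
  assumes "finite E" "\<And>x. w x \<ge> 0"
  shows "measure (disc_measure w) E = sum w E"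
  using assms by (simp add: measure_def emeasure_disc_measure_finite sum_nonneg)

lemma sum_le_emeasure_disc_measure:
  assumes "finite F" "F \<subseteq> E" "\<And>x. w x \<ge> 0"
  shows "ennreal (sum w F) \<le> emeasure (disc_measure w) E"
  using sum_le_nn_integral_count_space[OF assms(1,2), of "\<lambda>x. ennreal (w x)"] assms(3)
  by (simp add: emeasure_disc_measure)

lemma emeasure_disc_measure_le:
  assumes "\<And>x. w x \<ge> 0" and "\<And>F. finite F \<Longrightarrow> F \<subseteq> E \<Longrightarrow> sum w F \<le> B"
  shows "emeasure (disc_measure w) E \<le> ennreal B"
  unfolding emeasure_disc_measure using assms
  by (intro nn_integral_count_space_le) (simp add: ennreal_leI)

lemma sum_le_nn_integral_disc_measure:
  assumes "finite J" "\<And>x. w x \<ge> 0" "\<And>x. f x \<ge> 0"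
  shows "ennreal (\<Sum>j\<in>J. f j * w j) \<le> (\<integral>\<^sup>+x. ennreal (f x) \<partial>disc_measure w)"
proof -
  have "ennreal (\<Sum>j\<in>J. f j * w j) = (\<Sum>j\<in>J. ennreal (w j) * ennreal (f j))"
    using assms(2,3) by (simp add: sum_ennreal[symmetric] ennreal_mult mult.commute)
  also have "\<dots> \<le> (\<integral>\<^sup>+x. ennreal (f x) \<partial>disc_measure w)"
    unfolding nn_integral_disc_measure by (rule sum_le_nn_integral_count_space[OF assms(1)]) simp
  finally show ?thesis .
qed

lemma nn_integral_disc_measure_le:
  assumes "\<And>x. w x \<ge> 0" "\<And>x. f x \<ge> 0" and "\<And>J. finite J \<Longrightarrow> (\<Sum>j\<in>J. f j * w j) \<le> B"
  shows "(\<integral>\<^sup>+x. ennreal (f x) \<partial>disc_measure w) \<le> ennreal B"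
  unfolding nn_integral_disc_measure using assms
  by (intro nn_integral_count_space_le)
    (simp add: ennreal_mult'[symmetric] mult.commute ennreal_leI)

lemma set_nn_integral_disc_measure_iterated:
  assumes "\<And>i. \<mu> i \<ge> 0" "\<And>j. \<nu> j \<ge> 0" "\<And>i j. W i j \<ge> 0"
  shows "(\<integral>\<^sup>+i\<in>E. (\<integral>\<^sup>+j\<in>F. ennreal (W i j) \<partial>disc_measure \<nu>) \<partial>disc_measure \<mu>)
    = (\<integral>\<^sup>+k. ennreal (W (fst k) (snd k) * \<mu> (fst k) * \<nu> (snd k)) \<partial>count_space (E \<times> F))"
proof -
  define f where "f k = ennreal (W (fst k) (snd k) * \<mu> (fst k) * \<nu> (snd k)) * indicator (E \<times> F) k"
    for k :: "'a \<times> 'b"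
  have "ennreal (\<mu> i) * (\<integral>\<^sup>+j\<in>F. ennreal (W i j) \<partial>disc_measure \<nu>) * indicator E i
      = (\<integral>\<^sup>+j. f (i, j) \<partial>count_space UNIV)" for i
  proof -
    have "(\<integral>\<^sup>+j\<in>F. ennreal (W i j) \<partial>disc_measure \<nu>)
        = (\<integral>\<^sup>+j. ennreal (W i j * \<nu> j) * indicator F j \<partial>count_space UNIV)"
      unfolding set_nn_integral_disc_measure
      using assms by (simp add: nn_integral_count_space_indicator ennreal_mult mult.commute)
    then show ?thesis
      using assms by (simp add: f_def indicator_times ennreal_mult nn_integral_cmult[symmetric]
          nn_integral_multc[symmetric] mult_ac)
  qed
  then have "(\<integral>\<^sup>+i\<in>E. (\<integral>\<^sup>+j\<in>F. ennreal (W i j) \<partial>disc_measure \<nu>) \<partial>disc_measure \<mu>)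
      = (\<integral>\<^sup>+i. \<integral>\<^sup>+j. f (i, j) \<partial>count_space UNIV \<partial>count_space UNIV)"
    by (simp add: set_nn_integral_disc_measure nn_integral_count_space_indicator)
  also have "\<dots> = (\<integral>\<^sup>+k. f k \<partial>count_space UNIV)"
    by (rule nn_integral_fst_count_space)
  finally show ?thesis by (simp add: f_def nn_integral_count_space_indicator)
qed

lemma set_nn_integral_disc_measure_iterated_finite:
  assumes "\<And>i. \<mu> i \<ge> 0" "\<And>j. \<nu> j \<ge> 0" "\<And>i j. W i j \<ge> 0" "finite E" "finite F"
  shows "(\<integral>\<^sup>+i\<in>E. (\<integral>\<^sup>+j\<in>F. ennreal (W i j) \<partial>disc_measure \<nu>) \<partial>disc_measure \<mu>)
    = ennreal (\<Sum>i\<in>E. \<Sum>j\<in>F. W i j * \<mu> i * \<nu> j)"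
  using assms
  by (simp add: set_nn_integral_disc_measure_iterated nn_integral_count_space_finite
      sum.cartesian_product split_def)

lemma set_nn_integral_disc_measure_iterated_le:
  assumes "\<And>i. \<mu> i \<ge> 0" "\<And>j. \<nu> j \<ge> 0" "\<And>i j. W i j \<ge> 0"
    and bound: "\<And>E' F'. finite E' \<Longrightarrow> finite F' \<Longrightarrow> E' \<subseteq> E \<Longrightarrow> F' \<subseteq> F \<Longrightarrow>
      (\<Sum>i\<in>E'. \<Sum>j\<in>F'. W i j * \<mu> i * \<nu> j) \<le> B"
  shows "(\<integral>\<^sup>+i\<in>E. (\<integral>\<^sup>+j\<in>F. ennreal (W i j) \<partial>disc_measure \<nu>) \<partial>disc_measure \<mu>) \<le> ennreal B"
  unfolding set_nn_integral_disc_measure_iterated[OF assms(1-3)]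
proof (rule nn_integral_count_space_le)
  fix K assume K: "finite K" "K \<subseteq> E \<times> F"
  let ?w = "\<lambda>k. ennreal (W (fst k) (snd k) * \<mu> (fst k) * \<nu> (snd k))"
  have "sum ?w K \<le> sum ?w (fst ` K \<times> snd ` K)"
    using K(1) by (intro sum_mono2) force+
  also have "\<dots> = ennreal (\<Sum>i\<in>fst ` K. \<Sum>j\<in>snd ` K. W i j * \<mu> i * \<nu> j)"
    using K(1) assms(1-3) by (simp add: sum.cartesian_product split_def)
  also have "\<dots> \<le> ennreal B"
    using K by (intro ennreal_leI bound) auto
  finally show "sum ?w K \<le> ennreal B" .
qed

section \<open>Weak-type bounds on finite sets\<close>

(* The discrete form of a weak-type (Lorentz L^(1/h,\<infinity>)) bound on A. *)
definition weak_bound_on :: "'a set \<Rightarrow> ('a \<Rightarrow> real) \<Rightarrow> real \<Rightarrow> real \<Rightarrow> ('a \<Rightarrow> real) \<Rightarrow> bool" where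
  "weak_bound_on A \<mu> h K s \<longleftrightarrow>
     (\<forall>E\<subseteq>A. finite E \<longrightarrow> E \<noteq> {} \<longrightarrow> (\<exists>i\<in>E. sum \<mu> E powr h * s i \<le> K))"

lemma weak_bound_onD:
  "weak_bound_on A \<mu> h K s \<Longrightarrow> E \<subseteq> A \<Longrightarrow> finite E \<Longrightarrow> E \<noteq> {} \<Longrightarrow> \<exists>i\<in>E. sum \<mu> E powr h * s i \<le> K"
  unfolding weak_bound_on_def by blast

lemma weak_bound_on_subset:
  "weak_bound_on A \<mu> h K s \<Longrightarrow> B \<subseteq> A \<Longrightarrow> weak_bound_on B \<mu> h K s"
  unfolding weak_bound_on_def by blast

lemma weak_bound_on_mono:
  assumes "weak_bound_on A \<mu> h K s" and "\<And>i. i \<in> A \<Longrightarrow> s' i \<le> s i"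
  shows "weak_bound_on A \<mu> h K s'"
  unfolding weak_bound_on_def
proof (intro allI impI)
  fix E assume "E \<subseteq> A" "finite E" "E \<noteq> {}"
  then obtain i where "i \<in> E" "sum \<mu> E powr h * s i \<le> K"
    using assms(1) by (blast dest: weak_bound_onD)
  moreover have "sum \<mu> E powr h * s' i \<le> sum \<mu> E powr h * s i"
    using assms(2) \<open>E \<subseteq> A\<close> \<open>i \<in> E\<close> by (intro mult_left_mono) auto
  ultimately show "\<exists>i\<in>E. sum \<mu> E powr h * s' i \<le> K" by force
qed

lemma weak_bound_on_UNIV_iff: "weak_bound_on UNIV \<mu> h K s \<longleftrightarrow> (\<forall>E. finite E \<longrightarrow> weak_bound_on E \<mu> h K s)"
  unfolding weak_bound_on_def by (metis order_refl subset_UNIV)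

lemma concave_powr_increment:
  fixes a b h :: real
  assumes "0 \<le> a" "a \<le> b" "0 < b" "0 \<le> h" "h < 1"
  shows "(b - a) * b powr (-h) \<le> (b powr (1 - h) - a powr (1 - h)) / (1 - h)"
proof -
  define u where "u = a / b"
  have u: "0 \<le> u" "u \<le> 1" "a = u * b" using assms by (auto simp: u_def field_simps)
  have "u powr (1 - h) \<le> (1 - h) * u + h"
  proof (cases "u = 0")
    case False
    then show ?thesis
      using Youngs_inequality_0[of "1 - h" h u 1] u assms by simp
  qed (use assms in simp)
  then have "a powr (1 - h) \<le> ((1 - h) * u + h) * b powr (1 - h)"
    using u assms by (simp add: powr_mult mult_right_mono)
  moreover have "b powr (1 - h) = b * b powr (-h)"
    using assms by (simp add: powr_diff powr_minus field_simps)
  ultimately have "(1 - h) * ((b - a) * b powr (-h)) \<le> b powr (1 - h) - a powr (1 - h)"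
    using u by (simp add: algebra_simps)
  then show ?thesis using assms by (simp add: field_simps)
qed

lemma sum_mult_le_of_weak_bound_on:
  fixes \<mu> s :: "'a \<Rightarrow> real"
  assumes \<mu>: "\<And>i. \<mu> i > 0" and s: "\<And>i. s i \<ge> 0" and h: "0 \<le> h" "h < 1"
    and weak: "weak_bound_on A \<mu> h K s" and "finite E" "E \<subseteq> A"
  shows "(\<Sum>i\<in>E. \<mu> i * s i) \<le> K * sum \<mu> E powr (1 - h) / (1 - h)"
  using \<open>finite E\<close> \<open>E \<subseteq> A\<close>
proof (induction E rule: finite_remove_induct)
  case (remove E)
  obtain i where i: "i \<in> E" and si: "sum \<mu> E powr h * s i \<le> K"
    using weak_bound_onD[OF weak remove.prems remove.hyps(1,2)] by blast
  let ?E' = "E - {i}"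
  have mE: "sum \<mu> E = \<mu> i + sum \<mu> ?E'"
    using remove.hyps(1) i by (simp add: sum.remove)
  have "sum \<mu> E > 0"
    using remove.hyps(1,2) \<mu> by (simp add: sum_pos)
  have "sum \<mu> ?E' \<ge> 0" using \<mu> by (simp add: sum_nonneg less_imp_le)
  have "K \<ge> 0" using si s[of i] by (meson order_trans powr_ge_zero zero_le_mult_iff)
  have "s i \<le> K * sum \<mu> E powr (-h)"
    using si \<open>sum \<mu> E > 0\<close> by (simp add: powr_minus field_simps)
  have "(\<Sum>i\<in>E. \<mu> i * s i) = \<mu> i * s i + (\<Sum>i\<in>?E'. \<mu> i * s i)"
    using remove.hyps i by (simp add: sum.remove)
  also have "\<dots> \<le> \<mu> i * (K * sum \<mu> E powr (-h)) + K * sum \<mu> ?E' powr (1 - h) / (1 - h)"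
    using remove.IH[OF i] remove.prems \<open>s i \<le> _\<close> \<mu>[of i] by (intro add_mono mult_left_mono) auto
  also have "\<dots> = K * ((sum \<mu> E - sum \<mu> ?E') * sum \<mu> E powr (-h)
      + sum \<mu> ?E' powr (1 - h) / (1 - h))"
    using mE by (simp add: algebra_simps)
  also have "\<dots> \<le> K * ((sum \<mu> E powr (1 - h) - sum \<mu> ?E' powr (1 - h)) / (1 - h)
      + sum \<mu> ?E' powr (1 - h) / (1 - h))"
    using concave_powr_increment[of "sum \<mu> ?E'" "sum \<mu> E" h] \<open>sum \<mu> ?E' \<ge> 0\<close> mE \<mu>[of i]
      \<open>sum \<mu> E > 0\<close> h \<open>K \<ge> 0\<close>
    by (intro mult_left_mono add_right_mono) auto
  also have "\<dots> = K * sum \<mu> E powr (1 - h) / (1 - h)"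
    by (simp add: add_divide_distrib[symmetric])
  finally show ?case .
qed simp

section \<open>Weak and mixed norms on discrete spaces\<close>

lemma ennreal_pos_cases:
  fixes p :: ennreal
  assumes "0 < p"
  obtains (top) "p = \<infinity>" "enn2real (inverse p) = 0"
    | (real) P where "p = ennreal P" "0 < P" "enn2real p = P" "enn2real (inverse p) = 1 / P"
proof (cases p)
  case (real P)
  then show ?thesis using assms that(2)[of P] by (simp add: inverse_ennreal divide_inverse)
qed (use that in simp)

lemma mult_enn2real_inverse_less_one:
  assumes "1 \<le> q" "ennreal q < p"
  shows "q * enn2real (inverse p) < 1"
proof -
  have "0 < p" using le_less_trans[OF zero_le assms(2)] .
  then show ?thesis
    by (cases rule: ennreal_pos_cases) (use assms in \<open>auto simp: ennreal_less_iff\<close>)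
qed

lemma le_rearr_disc_measure:
  assumes "\<And>i. \<mu> i \<ge> 0" "finite E" "0 \<le> s" "s < sum \<mu> E" and y: "\<And>i. i \<in> E \<Longrightarrow> y \<le> g i"
  shows "y \<le> rearr (disc_measure \<mu>) g s"
  unfolding rearr_def
proof (rule Inf_greatest, clarsimp)
  fix l assume l: "emeasure (disc_measure \<mu>) {x. l < g x} \<le> ennreal s"
  show "y \<le> l"
  proof (rule ccontr)
    assume "\<not> y \<le> l"
    then have "E \<subseteq> {x. l < g x}" using y by (force simp: not_le)
    then have "ennreal (sum \<mu> E) \<le> ennreal s"
      using sum_le_emeasure_disc_measure[OF assms(2), of _ \<mu>] assms(1) l by (auto intro: order_trans)
    then show False using assms(3,4) by simp
  qed
qed

lemma rearr_disc_measure_le: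
  assumes "\<And>i. \<mu> i \<ge> 0" "0 < l" and "\<And>F. finite F \<Longrightarrow> F \<subseteq> {x. ennreal l < g x} \<Longrightarrow> sum \<mu> F \<le> s"
  shows "rearr (disc_measure \<mu>) g s \<le> ennreal l"
proof -
  have "emeasure (disc_measure \<mu>) {x. ennreal l < g x} \<le> ennreal s"
    using assms(1,3) by (rule emeasure_disc_measure_le)
  then show ?thesis
    unfolding rearr_def using \<open>0 < l\<close> by (intro Inf_lower) auto
qed

lemma ennreal_powr_mult_le_at_left:
  assumes "0 < m" "0 \<le> L" and below: "\<And>s. 0 < s \<Longrightarrow> s < m \<Longrightarrow> ennreal (s powr r) * y \<le> ennreal L"
  shows "ennreal (m powr r) * y \<le> ennreal L"
proof -
  have "y \<noteq> \<infinity>"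
    using below[of "m / 2"] \<open>0 < m\<close> by (auto simp: ennreal_mult_top top_unique)
  then obtain x where x: "y = ennreal x" "x \<ge> 0" by (cases y) auto
  have "m powr r * x \<le> L"
  proof (rule tendsto_le[OF trivial_limit_at_left_real])
    show "((\<lambda>s. s powr r * x) \<longlongrightarrow> m powr r * x) (at_left m)"
      using \<open>0 < m\<close> by (intro tendsto_intros) auto
    show "\<forall>\<^sub>F s in at_left m. s powr r * x \<le> L"
      using eventually_at_left_real[OF \<open>0 < m\<close>]
      by eventually_elim (use below x \<open>0 \<le> L\<close> in \<open>simp add: ennreal_mult'[symmetric]\<close>)
  qed simp
  then show ?thesis using x by (simp add: ennreal_mult'[symmetric] ennreal_leI)
qed

lemma weak_norm_disc_measure_leD:
  fixes g :: "'a \<Rightarrow> ennreal"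
  assumes \<mu>: "\<And>i. \<mu> i > 0" and "0 < p" "0 \<le> L"
    and norm: "weak_norm (disc_measure \<mu>) p g \<le> ennreal L" and E: "finite E" "E \<noteq> {}"
  shows "\<exists>i\<in>E. ennreal (sum \<mu> E powr enn2real (inverse p)) * g i \<le> ennreal L"
proof -
  have "sum \<mu> E > 0" using sum_pos[OF E, of \<mu>] \<mu> by simp
  define i0 where "i0 = arg_min_on g E"
  have "i0 \<in> E" and i0_min: "\<And>i. i \<in> E \<Longrightarrow> g i0 \<le> g i"
    using arg_min_if_finite(1)[OF E] arg_min_least[OF E] by (auto simp: i0_def)
  from \<open>0 < p\<close> show ?thesis
  proof (cases rule: ennreal_pos_cases)
    case top
    then have "g i0 \<le> ennreal L"
      using norm by (simp add: weak_norm_def) (meson SUP_upper UNIV_I order_trans)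
    then show ?thesis using \<open>i0 \<in> E\<close> \<open>sum \<mu> E > 0\<close> top by auto
  next
    case (real P)
    have "ennreal (s powr (1 / P)) * g i0 \<le> ennreal L" if "0 < s" "s < sum \<mu> E" for s
    proof -
      have "ennreal (s powr (1 / P)) * g i0 \<le> ennreal (s powr (1 / P)) * rearr (disc_measure \<mu>) g s"
        using le_rearr_disc_measure[OF _ E(1) _ \<open>s < sum \<mu> E\<close> i0_min] \<mu>[THEN less_imp_le] \<open>0 < s\<close>
        by (simp add: mult_left_mono)
      also have "\<dots> \<le> weak_norm (disc_measure \<mu>) p g"
        unfolding weak_norm_def using real \<open>0 < s\<close> by (auto intro!: SUP_upper2[of s])
      finally show ?thesis using norm by simp
    qed
    then show ?thesis
      using ennreal_powr_mult_le_at_left[OF \<open>sum \<mu> E > 0\<close> \<open>0 \<le> L\<close>] \<open>i0 \<in> E\<close> real by auto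
  qed
qed

lemma weak_norm_disc_measure_leI:
  fixes g :: "'a \<Rightarrow> ennreal"
  assumes \<mu>: "\<And>i. \<mu> i > 0" and "0 < p" "0 < A"
    and bound: "\<And>E. finite E \<Longrightarrow> E \<noteq> {} \<Longrightarrow>
      \<exists>i\<in>E. ennreal (sum \<mu> E powr enn2real (inverse p)) * g i \<le> ennreal A"
  shows "weak_norm (disc_measure \<mu>) p g \<le> ennreal A"
  using \<open>0 < p\<close>
proof (cases rule: ennreal_pos_cases)
  case top
  have "g i \<le> ennreal A" for i
    using bound[of "{i}"] \<mu>[of i] top by simp
  then show ?thesis using top by (simp add: weak_norm_def SUP_least)
next
  case (real P)
  have "ennreal (s powr (1 / P)) * rearr (disc_measure \<mu>) g s \<le> ennreal A" if "s > 0" for s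
  proof -
    define lam where "lam = A * s powr (- 1 / P)"
    have "lam > 0" using \<open>0 < A\<close> \<open>s > 0\<close> by (simp add: lam_def)
    have "s powr (1 / P) * lam = A"
      using \<open>s > 0\<close> by (simp add: lam_def powr_minus_divide field_simps powr_add[symmetric])
    have "rearr (disc_measure \<mu>) g s \<le> ennreal lam"
    proof (rule rearr_disc_measure_le)
      fix F assume F: "finite F" "F \<subseteq> {x. ennreal lam < g x}"
      show "sum \<mu> F \<le> s"
      proof (rule ccontr)
        assume "\<not> sum \<mu> F \<le> s"
        then have "F \<noteq> {}" using \<open>s > 0\<close> by auto
        then obtain i where "i \<in> F" and i: "ennreal (sum \<mu> F powr (1 / P)) * g i \<le> ennreal A"
          using bound[OF F(1)] real by auto
        have "s powr (1 / P) < sum \<mu> F powr (1 / P)"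
          using \<open>\<not> sum \<mu> F \<le> s\<close> \<open>s > 0\<close> real by (intro powr_less_mono2) auto
        then have "A < sum \<mu> F powr (1 / P) * lam"
          using \<open>lam > 0\<close> \<open>s powr (1 / P) * lam = A\<close> by force
        moreover have "ennreal lam \<le> g i" using F \<open>i \<in> F\<close> by (auto intro: less_imp_le)
        then have "ennreal (sum \<mu> F powr (1 / P) * lam) \<le> ennreal (sum \<mu> F powr (1 / P)) * g i"
          using \<open>lam > 0\<close> by (simp add: ennreal_mult mult_left_mono)
        ultimately show False using i \<open>0 < A\<close> by (metis ennreal_less_iff leD order_trans less_imp_le)
      qed
    qed (use \<mu> \<open>lam > 0\<close> in \<open>auto intro: less_imp_le\<close>)
    then have "ennreal (s powr (1 / P)) * rearr (disc_measure \<mu>) g s \<le> ennreal (s powr (1 / P) * lam)"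
      using \<open>lam > 0\<close> by (simp add: ennreal_mult' mult_left_mono)
    then show ?thesis using \<open>s powr (1 / P) * lam = A\<close> by simp
  qed
  then show ?thesis using real by (auto simp: weak_norm_def intro: SUP_least)
qed

lemma powr_le_powr_iff:
  fixes x y a :: real
  assumes "0 \<le> x" "0 \<le> y" "0 < a"
  shows "x powr a \<le> y powr a \<longleftrightarrow> x \<le> y"
  using assms by (meson not_le powr_less_mono2 powr_mono2 less_imp_le)

lemma mult_epow_le_iff:
  assumes "0 < c" "0 < q" "0 \<le> A"
  shows "ennreal c * epow I (1 / q) \<le> ennreal A \<longleftrightarrow> ennreal (c powr q) * I \<le> ennreal (A powr q)"
proof (cases I)
  case (real x)
  have "c * x powr (1 / q) \<le> A \<longleftrightarrow> (c * x powr (1 / q)) powr q \<le> A powr q"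
    using assms real by (simp add: powr_le_powr_iff)
  also have "(c * x powr (1 / q)) powr q = c powr q * x"
    using assms real by (simp add: powr_mult powr_powr)
  finally show ?thesis
    using assms real by (simp add: epow_def ennreal_mult'[symmetric])
qed (use assms in \<open>simp add: epow_def ennreal_mult_top top_unique\<close>)

lemma mixed_norm_leD:
  assumes \<mu>: "\<And>i. \<mu> i > 0" and \<nu>: "\<And>j. \<nu> j > 0" and "0 < q" "0 < p" "0 \<le> L"
    and norm: "mixed_norm \<mu> \<nu> p q b \<le> ennreal L" and "finite J"
  shows "weak_bound_on UNIV \<mu> (q * enn2real (inverse p)) (L powr q) (\<lambda>i. \<Sum>j\<in>J. \<bar>b i j\<bar> powr q * \<nu> j)"
  unfolding weak_bound_on_def
proof (intro allI impI)
  fix E :: "'a set" assume "finite E" "E \<noteq> {}"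
  let ?c = "sum \<mu> E powr enn2real (inverse p)"
  have "?c > 0" using sum_pos[OF \<open>finite E\<close> \<open>E \<noteq> {}\<close>, of \<mu>] \<mu> by simp
  obtain i where "i \<in> E" and
    "ennreal ?c * epow (\<integral>\<^sup>+j. ennreal (\<bar>b i j\<bar> powr q) \<partial>disc_measure \<nu>) (1 / q) \<le> ennreal L"
    using weak_norm_disc_measure_leD[of \<mu>, OF \<mu> \<open>0 < p\<close> \<open>0 \<le> L\<close>] norm \<open>finite E\<close> \<open>E \<noteq> {}\<close>
    unfolding mixed_norm_def by blast
  then have I: "ennreal (?c powr q) * (\<integral>\<^sup>+j. ennreal (\<bar>b i j\<bar> powr q) \<partial>disc_measure \<nu>)
      \<le> ennreal (L powr q)"
    using mult_epow_le_iff[OF \<open>?c > 0\<close> \<open>0 < q\<close> \<open>0 \<le> L\<close>] by blast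
  have "ennreal (?c powr q * (\<Sum>j\<in>J. \<bar>b i j\<bar> powr q * \<nu> j))
      = ennreal (?c powr q) * ennreal (\<Sum>j\<in>J. \<bar>b i j\<bar> powr q * \<nu> j)"
    by (simp add: ennreal_mult')
  also have "\<dots> \<le> ennreal (?c powr q) * (\<integral>\<^sup>+j. ennreal (\<bar>b i j\<bar> powr q) \<partial>disc_measure \<nu>)"
    using \<nu>[THEN less_imp_le] \<open>finite J\<close> by (intro mult_left_mono sum_le_nn_integral_disc_measure) auto
  finally have "ennreal (?c powr q * (\<Sum>j\<in>J. \<bar>b i j\<bar> powr q * \<nu> j)) \<le> ennreal (L powr q)"
    using I by (rule order_trans)
  then show "\<exists>i\<in>E. sum \<mu> E powr (q * enn2real (inverse p)) * (\<Sum>j\<in>J. \<bar>b i j\<bar> powr q * \<nu> j) \<le> L powr q"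
    using \<open>i \<in> E\<close> \<open>?c > 0\<close> by (intro bexI[of _ i]) (auto simp: powr_powr mult.commute)
qed

lemma ex_nn_integral_disc_measure_le:
  fixes f :: "'a \<Rightarrow> 'b \<Rightarrow> real"
  assumes \<nu>: "\<And>j. \<nu> j \<ge> 0" and f: "\<And>i j. f i j \<ge> 0" and "finite E" "0 < c"
    and partial: "\<And>J. finite J \<Longrightarrow> \<exists>i\<in>E. c * (\<Sum>j\<in>J. f i j * \<nu> j) \<le> K"
  shows "\<exists>i\<in>E. ennreal c * (\<integral>\<^sup>+j. ennreal (f i j) \<partial>disc_measure \<nu>) \<le> ennreal K"
proof (rule ccontr)
  \<comment> \<open>otherwise every i \<in> E has a finite row sum above K / c, and the union of their index sets
    contradicts the hypothesis\<close>
  assume contra: "\<not> ?thesis"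
  have "\<exists>J. finite J \<and> K / c < (\<Sum>j\<in>J. f i j * \<nu> j)" if "i \<in> E" for i
  proof (rule ccontr)
    assume "\<not> ?thesis"
    then have "(\<integral>\<^sup>+j. ennreal (f i j) \<partial>disc_measure \<nu>) \<le> ennreal (K / c)"
      using \<nu> f by (intro nn_integral_disc_measure_le) (auto simp: not_less)
    then have "ennreal c * (\<integral>\<^sup>+j. ennreal (f i j) \<partial>disc_measure \<nu>) \<le> ennreal c * ennreal (K / c)"
      by (rule mult_left_mono) simp
    also have "\<dots> \<le> ennreal K"
      using \<open>0 < c\<close> by (simp add: ennreal_mult'[symmetric])
    finally show False using contra \<open>i \<in> E\<close> by blast
  qed
  then obtain J where J: "\<And>i. i \<in> E \<Longrightarrow> finite (J i)"
    and J_gt: "\<And>i. i \<in> E \<Longrightarrow> K / c < (\<Sum>j\<in>J i. f i j * \<nu> j)"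
    by metis
  obtain i where "i \<in> E" and i: "c * (\<Sum>j\<in>\<Union>(J ` E). f i j * \<nu> j) \<le> K"
    using partial[of "\<Union>(J ` E)"] J \<open>finite E\<close> by blast
  have "(\<Sum>j\<in>J i. f i j * \<nu> j) \<le> (\<Sum>j\<in>\<Union>(J ` E). f i j * \<nu> j)"
    using J \<open>finite E\<close> \<open>i \<in> E\<close> \<nu> f by (intro sum_mono2) auto
  then have "c * (\<Sum>j\<in>J i. f i j * \<nu> j) \<le> K"
    using i \<open>0 < c\<close> by (meson mult_left_mono order_trans less_imp_le)
  then show False
    using J_gt[OF \<open>i \<in> E\<close>] \<open>0 < c\<close> by (simp add: field_simps)
qed

lemma mixed_norm_leI:
  assumes \<mu>: "\<And>i. \<mu> i > 0" and \<nu>: "\<And>j. \<nu> j > 0" and "0 < q" "0 < p" "0 < A"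
    and weak: "\<And>J. finite J \<Longrightarrow>
      weak_bound_on UNIV \<mu> (q * enn2real (inverse p)) (A powr q) (\<lambda>i. \<Sum>j\<in>J. \<bar>b i j\<bar> powr q * \<nu> j)"
  shows "mixed_norm \<mu> \<nu> p q b \<le> ennreal A"
  unfolding mixed_norm_def
proof (rule weak_norm_disc_measure_leI[of \<mu>, OF \<mu> \<open>0 < p\<close> \<open>0 < A\<close>])
  fix E :: "'a set" assume E: "finite E" "E \<noteq> {}"
  define c where "c = sum \<mu> E powr enn2real (inverse p)"
  have "c > 0" using sum_pos[OF E, of \<mu>] \<mu> by (simp add: c_def)
  have "c powr q = sum \<mu> E powr (q * enn2real (inverse p))"
    by (simp add: c_def powr_powr mult.commute)
  then have "\<exists>i\<in>E. ennreal (c powr q) * (\<integral>\<^sup>+j. ennreal (\<bar>b i j\<bar> powr q) \<partial>disc_measure \<nu>)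
      \<le> ennreal (A powr q)"
    using weak_bound_onD[OF weak _ E] \<open>c > 0\<close> \<nu>[THEN less_imp_le]
    by (intro ex_nn_integral_disc_measure_le E(1)) auto
  then show "\<exists>i\<in>E. ennreal (sum \<mu> E powr enn2real (inverse p))
      * epow (\<integral>\<^sup>+j. ennreal (\<bar>b i j\<bar> powr q) \<partial>disc_measure \<nu>) (1 / q) \<le> ennreal A"
    using mult_epow_le_iff[OF \<open>c > 0\<close> \<open>0 < q\<close>] \<open>0 < A\<close> by (auto simp: c_def)
qed

section \<open>Splitting a matrix into rows and columns\<close>

(* With W = |a|^q, K1 = A^q and K2 = (A/t)^q this is |||a||| \<le> A restricted to finite blocks. *)
definition block_bound ::
    "('a \<Rightarrow> real) \<Rightarrow> ('b \<Rightarrow> real) \<Rightarrow> real \<Rightarrow> real \<Rightarrow> real \<Rightarrow> ('a \<Rightarrow> 'b \<Rightarrow> real) \<Rightarrow> bool" where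
  "block_bound \<mu> \<nu> h K1 K2 W \<longleftrightarrow> (\<forall>E F. finite E \<longrightarrow> finite F \<longrightarrow> E \<noteq> {} \<longrightarrow> F \<noteq> {} \<longrightarrow>
     (\<Sum>i\<in>E. \<Sum>j\<in>F. W i j * \<mu> i * \<nu> j) \<le> max (K1 * sum \<mu> E powr (1 - h)) (K2 * sum \<nu> F powr (1 - h)))"

(* x k is the share of the entry k given to the first summand; the rest goes to the second. *)
definition weak_split :: "'a set \<Rightarrow> 'b set \<Rightarrow> ('a \<Rightarrow> real) \<Rightarrow> ('b \<Rightarrow> real) \<Rightarrow> real \<Rightarrow> real \<Rightarrow> real
    \<Rightarrow> ('a \<Rightarrow> 'b \<Rightarrow> real) \<Rightarrow> ('a \<times> 'b \<Rightarrow> real) \<Rightarrow> bool" where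
  "weak_split R C \<mu> \<nu> h K1 K2 W x \<longleftrightarrow>
     weak_bound_on R \<mu> h K1 (\<lambda>i. \<Sum>j\<in>C. x (i, j) * W i j * \<nu> j) \<and>
     weak_bound_on C \<nu> h K2 (\<lambda>j. \<Sum>i\<in>R. (1 - x (i, j)) * W i j * \<mu> i)"

lemma weak_split_transpose:
  "weak_split R C \<mu> \<nu> h K1 K2 W x \<Longrightarrow>
    weak_split C R \<nu> \<mu> h K2 K1 (\<lambda>j i. W i j) (\<lambda>(j, i). 1 - x (i, j))"
  unfolding weak_split_def by simp

lemma weak_split_mono:
  assumes "weak_split R' C' \<mu> \<nu> h K1 K2 W x" "R \<subseteq> R'" "C \<subseteq> C'" "finite R'" "finite C'"
    and "\<And>i j. W i j \<ge> 0" "\<And>i. \<mu> i \<ge> 0" "\<And>j. \<nu> j \<ge> 0" "\<And>k. x k \<in> {0, 1}"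
  shows "weak_split R C \<mu> \<nu> h K1 K2 W x"
proof -
  have "0 \<le> x k" "0 \<le> 1 - x k" for k using assms(9)[of k] by auto
  then have "(\<Sum>j\<in>C. x (i, j) * W i j * \<nu> j) \<le> (\<Sum>j\<in>C'. x (i, j) * W i j * \<nu> j)"
    "(\<Sum>i\<in>R. (1 - x (i, j)) * W i j * \<mu> i) \<le> (\<Sum>i\<in>R'. (1 - x (i, j)) * W i j * \<mu> i)" for i j
    using assms(2-8) by (auto intro!: sum_mono2 mult_nonneg_nonneg)
  then show ?thesis
    using assms(1-3) unfolding weak_split_def by (meson weak_bound_on_mono weak_bound_on_subset)
qed

lemma sum_mult_gt_if_heavy:
  fixes \<mu> s :: "'a \<Rightarrow> real"
  assumes "finite R" "R \<noteq> {}" "\<And>i. \<mu> i > 0"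
    and heavy: "\<And>i. i \<in> R \<Longrightarrow> sum \<mu> R powr h * s i > K"
  shows "(\<Sum>i\<in>R. \<mu> i * s i) > K * sum \<mu> R powr (1 - h)"
proof -
  have "sum \<mu> R > 0" using sum_pos[OF assms(1,2), of \<mu>] assms(3) by simp
  have "sum \<mu> R powr h * (K * sum \<mu> R powr (1 - h)) = (\<Sum>i\<in>R. \<mu> i * K)"
    using \<open>sum \<mu> R > 0\<close> by (simp add: sum_distrib_left powr_add[symmetric] mult.commute mult.left_commute)
  also have "\<dots> < (\<Sum>i\<in>R. \<mu> i * (sum \<mu> R powr h * s i))"
    using assms by (intro sum_strict_mono mult_strict_left_mono) auto
  also have "\<dots> = sum \<mu> R powr h * (\<Sum>i\<in>R. \<mu> i * s i)"
    by (simp add: sum_distrib_left mult_ac)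
  finally show ?thesis using \<open>sum \<mu> R > 0\<close> by simp
qed

lemma block_bound_light_line:
  assumes block: "block_bound \<mu> \<nu> h K1 K2 W" and "\<And>i. \<mu> i > 0" "\<And>j. \<nu> j > 0"
    and R: "finite R" "R \<noteq> {}" and C: "finite C" "C \<noteq> {}"
  shows "(\<exists>i\<in>R. sum \<mu> R powr h * (\<Sum>j\<in>C. W i j * \<nu> j) \<le> K1)
    \<or> (\<exists>j\<in>C. sum \<nu> C powr h * (\<Sum>i\<in>R. W i j * \<mu> i) \<le> K2)"
proof (rule ccontr)
  assume "\<not> ?thesis"
  then have "(\<Sum>i\<in>R. \<mu> i * (\<Sum>j\<in>C. W i j * \<nu> j)) > K1 * sum \<mu> R powr (1 - h)"
    and "(\<Sum>j\<in>C. \<nu> j * (\<Sum>i\<in>R. W i j * \<mu> i)) > K2 * sum \<nu> C powr (1 - h)"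
    using assms by (auto intro!: sum_mult_gt_if_heavy simp: not_le)
  moreover have "(\<Sum>i\<in>R. \<mu> i * (\<Sum>j\<in>C. W i j * \<nu> j)) = (\<Sum>i\<in>R. \<Sum>j\<in>C. W i j * \<mu> i * \<nu> j)"
    and "(\<Sum>j\<in>C. \<nu> j * (\<Sum>i\<in>R. W i j * \<mu> i)) = (\<Sum>i\<in>R. \<Sum>j\<in>C. W i j * \<mu> i * \<nu> j)"
    by (simp_all add: sum_distrib_left mult_ac sum.swap[of _ C R])
  moreover have "(\<Sum>i\<in>R. \<Sum>j\<in>C. W i j * \<mu> i * \<nu> j)
      \<le> max (K1 * sum \<mu> R powr (1 - h)) (K2 * sum \<nu> C powr (1 - h))"
    using block R C unfolding block_bound_def by blast
  ultimately show False by linarith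
qed

lemma weak_split_insert_row:
  assumes split: "weak_split (R - {i}) C \<mu> \<nu> h K1 K2 W x" and "i \<in> R" "finite R"
    and light: "sum \<mu> R powr h * (\<Sum>j\<in>C. W i j * \<nu> j) \<le> K1"
    and "\<And>i j. W i j \<ge> 0" "\<And>i. \<mu> i > 0" "\<And>j. \<nu> j \<ge> 0" "0 \<le> h"
  shows "weak_split R C \<mu> \<nu> h K1 K2 W (\<lambda>k. if fst k = i then 1 else x k)"
  unfolding weak_split_def weak_bound_on_def
proof (intro conjI allI impI)
  fix E assume E: "E \<subseteq> R" "finite E" "E \<noteq> {}"
  show "\<exists>i'\<in>E. sum \<mu> E powr h * (\<Sum>j\<in>C. (if fst (i', j) = i then 1 else x (i', j)) * W i' j * \<nu> j) \<le> K1"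
  proof (cases "i \<in> E")
    case True
    have "sum \<mu> E \<le> sum \<mu> R"
      using E \<open>finite R\<close> assms(6) by (intro sum_mono2) (auto intro: less_imp_le)
    then have "sum \<mu> E powr h \<le> sum \<mu> R powr h"
      using sum_pos[OF E(2,3), of \<mu>] assms(6,8) by (intro powr_mono2) auto
    then have "sum \<mu> E powr h * (\<Sum>j\<in>C. W i j * \<nu> j) \<le> K1"
      using light assms(5,7) by (meson mult_right_mono order_trans sum_nonneg mult_nonneg_nonneg)
    then show ?thesis using True by (intro bexI[of _ i]) auto
  next
    case False
    then have "E \<subseteq> R - {i}" using E(1) by auto
    then obtain i' where "i' \<in> E" "sum \<mu> E powr h * (\<Sum>j\<in>C. x (i', j) * W i' j * \<nu> j) \<le> K1"
      using split E(2,3) unfolding weak_split_def by (blast dest: weak_bound_onD)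
    moreover have "i' \<noteq> i" using \<open>i' \<in> E\<close> False by blast
    ultimately show ?thesis by (intro bexI[of _ i']) auto
  qed
next
  fix F assume F: "F \<subseteq> C" "finite F" "F \<noteq> {}"
  obtain j where "j \<in> F" and j: "sum \<nu> F powr h * (\<Sum>i\<in>R - {i}. (1 - x (i, j)) * W i j * \<mu> i) \<le> K2"
    using split F unfolding weak_split_def by (blast dest: weak_bound_onD)
  have "(\<Sum>i'\<in>R. (1 - (if fst (i', j) = i then 1 else x (i', j))) * W i' j * \<mu> i')
      = (\<Sum>i'\<in>R - {i}. (1 - x (i', j)) * W i' j * \<mu> i')"
    using \<open>i \<in> R\<close> \<open>finite R\<close> by (simp add: sum.remove)
  then show "\<exists>j\<in>F. sum \<nu> F powr h * (\<Sum>i'\<in>R. (1 - (if fst (i', j) = i then 1 else x (i', j))) * W i' j * \<mu> i') \<le> K2"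
    using \<open>j \<in> F\<close> j by (auto intro!: bexI[of _ j])
qed

lemma weak_split_exists_finite:
  assumes block: "block_bound \<mu> \<nu> h K1 K2 W" and W: "\<And>i j. W i j \<ge> 0"
    and \<mu>: "\<And>i. \<mu> i > 0" and \<nu>: "\<And>j. \<nu> j > 0" and "0 \<le> h" "0 \<le> K1" "0 \<le> K2"
    and "finite R" "finite C"
  shows "\<exists>x. (\<forall>k. x k \<in> {0, 1}) \<and> weak_split R C \<mu> \<nu> h K1 K2 W x"
  using \<open>finite R\<close> \<open>finite C\<close>
proof (induction "card R + card C" arbitrary: R C rule: less_induct)
  case less
  have "\<nu> j \<ge> 0" "\<mu> i \<ge> 0" for i j using \<mu>[of i] \<nu>[of j] by auto
  consider "R = {} \<or> C = {}"
    | (row) i where "i \<in> R" "sum \<mu> R powr h * (\<Sum>j\<in>C. W i j * \<nu> j) \<le> K1"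
    | (column) j where "j \<in> C" "sum \<nu> C powr h * (\<Sum>i\<in>R. W i j * \<mu> i) \<le> K2"
    using block_bound_light_line[OF block \<mu> \<nu>] less.prems by blast
  then show ?case
  proof cases
    case 1
    then have "weak_split R C \<mu> \<nu> h K1 K2 W (\<lambda>_. 0)"
      using \<open>0 \<le> K1\<close> \<open>0 \<le> K2\<close> by (auto simp: weak_split_def weak_bound_on_def)
    then show ?thesis by auto
  next
    case row
    obtain x where "\<forall>k. x k \<in> {0, 1}" and x: "weak_split (R - {i}) C \<mu> \<nu> h K1 K2 W x"
      using less.hyps[of "R - {i}" C] less.prems row(1) card_Diff1_less by fastforce
    moreover have "weak_split R C \<mu> \<nu> h K1 K2 W (\<lambda>k. if fst k = i then 1 else x k)"
      using weak_split_insert_row[of R i C \<mu> \<nu> h K1 K2 W x] row less.prems W \<mu> \<open>\<nu> _ \<ge> 0\<close> \<open>0 \<le> h\<close> x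
      by blast
    ultimately show ?thesis by (intro exI[of _ "\<lambda>k. if fst k = i then 1 else x k"]) auto
  next
    case column
    \<comment> \<open>the row case for the transposed matrix\<close>
    obtain x where x: "\<forall>k. x k \<in> {0, 1}" "weak_split R (C - {j}) \<mu> \<nu> h K1 K2 W x"
      using less.hyps[of R "C - {j}"] less.prems column(1) card_Diff1_less by fastforce
    define y where "y k = (if fst k = j then 1 else (\<lambda>(j, i). 1 - x (i, j)) k)" for k
    have y: "weak_split C R \<nu> \<mu> h K2 K1 (\<lambda>j i. W i j) y"
      unfolding y_def
      by (rule weak_split_insert_row[OF weak_split_transpose[OF x(2)]])
        (use column less.prems W \<nu> \<open>\<mu> _ \<ge> 0\<close> \<open>0 \<le> h\<close> in auto)
    have "weak_split R C \<mu> \<nu> h K1 K2 W (\<lambda>(i, j). 1 - y (j, i))"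
      using weak_split_transpose[OF y] by simp
    moreover have "\<forall>k. (\<lambda>(i, j). 1 - y (j, i)) k \<in> {0, 1}"
      using x(1) by (auto simp: y_def split: prod.splits)
    ultimately show ?thesis by blast
  qed
qed

lemma closed_Collect_weak_bound_on:
  fixes s :: "'i \<Rightarrow> 'x::topological_space \<Rightarrow> real"
  assumes "finite A" and cont: "\<And>i. continuous_on UNIV (s i)"
  shows "closed {x. weak_bound_on A \<mu> h K (\<lambda>i. s i x)}"
proof -
  have "{x. weak_bound_on A \<mu> h K (\<lambda>i. s i x)}
      = (\<Inter>E\<in>{E. E \<subseteq> A \<and> E \<noteq> {}}. \<Union>i\<in>E. {x. sum \<mu> E powr h * s i x \<le> K})"
    unfolding weak_bound_on_def using \<open>finite A\<close> by (auto dest: finite_subset)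
  also have "closed \<dots>"
    using \<open>finite A\<close> cont
    by (intro closed_INT ballI closed_UN closed_Collect_le continuous_intros)
      (auto dest: finite_subset)
  finally show ?thesis .
qed

(* Tychonoff: the splittings of the finite blocks have the finite intersection property. *)
lemma weak_split_exists:
  assumes block: "block_bound \<mu> \<nu> h K1 K2 W" and W: "\<And>i j. W i j \<ge> 0"
    and \<mu>: "\<And>i. \<mu> i > 0" and \<nu>: "\<And>j. \<nu> j > 0" and "0 \<le> h" "0 \<le> K1" "0 \<le> K2"
  shows "\<exists>x. (\<forall>k. x k \<in> {0, 1}) \<and>
    (\<forall>R C. finite R \<longrightarrow> finite C \<longrightarrow> weak_split R C \<mu> \<nu> h K1 K2 W x)"
proof -
  define S where "S RC = {x. weak_split (fst RC) (snd RC) \<mu> \<nu> h K1 K2 W x}" for RC :: "'a set \<times> 'b set"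
  define I where "I = {RC :: 'a set \<times> 'b set. finite (fst RC) \<and> finite (snd RC)}"
  define B where "B = PiE UNIV (\<lambda>_ :: 'a \<times> 'b. {0 :: real, 1})"
  have "compactin (product_topology (\<lambda>_. euclidean) UNIV) B"
    unfolding B_def by (subst compactin_PiE) (auto intro: finite_imp_compact)
  then have "compact B" by (simp add: euclidean_product_topology)
  moreover have "closed (S RC)" if "RC \<in> I" for RC
    using that unfolding S_def I_def weak_split_def
    by (intro closed_Collect_conj closed_Collect_weak_bound_on continuous_intros
        continuous_on_product_coordinates) auto
  moreover have "B \<inter> (\<Inter>RC\<in>I'. S RC) \<noteq> {}" if "finite I'" "I' \<subseteq> I" for I'
  proof -
    define U where "U = \<Union>(fst ` I')"
    define V where "V = \<Union>(snd ` I')"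
    have "finite U" "finite V" using that by (auto simp: U_def V_def I_def)
    then obtain x where x01: "\<forall>k. x k \<in> {0, 1}" and x: "weak_split U V \<mu> \<nu> h K1 K2 W x"
      using weak_split_exists_finite[OF assms] by blast
    have "x \<in> S RC" if "RC \<in> I'" for RC
    proof -
      have "fst RC \<subseteq> U" "snd RC \<subseteq> V" using that by (auto simp: U_def V_def)
      then show ?thesis
        unfolding S_def mem_Collect_eq
        by (rule weak_split_mono[OF x _ _ \<open>finite U\<close> \<open>finite V\<close> W \<mu>[THEN less_imp_le]
              \<nu>[THEN less_imp_le] x01[rule_format]])
    qed
    moreover have "x \<in> B" using x01 by (simp add: B_def PiE_iff)
    ultimately show ?thesis by blast
  qed
  ultimately have "B \<inter> (\<Inter>RC\<in>I. S RC) \<noteq> {}"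
    by (rule compact_imp_fip_image)
  then obtain x where "x \<in> B" and "\<And>RC. RC \<in> I \<Longrightarrow> x \<in> S RC" by blast
  then show ?thesis
    unfolding B_def S_def I_def by (intro exI[of _ x]) (auto simp: PiE_iff)
qed

section \<open>The upper bound\<close>

lemma triple_norm_ge_finite_block:
  fixes \<mu> :: "'m \<Rightarrow> real" and \<nu> :: "'n \<Rightarrow> real" and a :: "'m \<Rightarrow> 'n \<Rightarrow> real"
  assumes \<mu>: "\<And>i. \<mu> i > 0" and \<nu>: "\<And>j. \<nu> j > 0"
    and E: "finite E" "E \<noteq> {}" and F: "finite F" "F \<noteq> {}"
  shows "ennreal (1 / max (sum \<mu> E powr (1 / q - enn2real (inverse p)))
                          (sum \<nu> F powr (1 / q - enn2real (inverse p)) / t))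
      * epow (ennreal (\<Sum>i\<in>E. \<Sum>j\<in>F. \<bar>a i j\<bar> powr q * \<mu> i * \<nu> j)) (1 / q)
    \<le> triple_norm \<mu> \<nu> p q t a"
  unfolding triple_norm_def Let_def
proof (rule SUP_upper2[of "(E, F)"])
  show "(E, F) \<in> {(E, F). 0 < emeasure (disc_measure \<mu>) E \<and> emeasure (disc_measure \<mu>) E < \<infinity>
      \<and> 0 < emeasure (disc_measure \<nu>) F \<and> emeasure (disc_measure \<nu>) F < \<infinity>}"
    using E F \<mu> \<nu> sum_pos[OF E, of \<mu>] sum_pos[OF F, of \<nu>]
    by (simp add: emeasure_disc_measure_finite less_imp_le)
qed (use E F \<mu> \<nu> in \<open>simp add: less_imp_le measure_disc_measure_finite
      set_nn_integral_disc_measure_iterated_finite\<close>)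

lemma triple_norm_le_imp_block_bound:
  fixes \<mu> :: "'m \<Rightarrow> real" and \<nu> :: "'n \<Rightarrow> real" and a :: "'m \<Rightarrow> 'n \<Rightarrow> real"
  assumes \<mu>: "\<And>i. \<mu> i > 0" and \<nu>: "\<And>j. \<nu> j > 0" and "0 < t" "0 < q" "0 \<le> A"
    and norm: "triple_norm \<mu> \<nu> p q t a \<le> ennreal A"
  shows "block_bound \<mu> \<nu> (q * enn2real (inverse p)) (A powr q) ((A / t) powr q) (\<lambda>i j. \<bar>a i j\<bar> powr q)"
  unfolding block_bound_def
proof (intro allI impI)
  fix E :: "'m set" and F :: "'n set" assume E: "finite E" "E \<noteq> {}" and F: "finite F" "F \<noteq> {}"
  define h where "h = q * enn2real (inverse p)"
  define \<alpha> where "\<alpha> = 1 / q - enn2real (inverse p)"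
  have "\<alpha> * q = 1 - h" using \<open>0 < q\<close> by (simp add: \<alpha>_def h_def field_simps)
  define D where "D = (\<Sum>i\<in>E. \<Sum>j\<in>F. \<bar>a i j\<bar> powr q * \<mu> i * \<nu> j)"
  define M where "M = max (sum \<mu> E powr \<alpha>) (sum \<nu> F powr \<alpha> / t)"
  have "M > 0" using sum_pos[OF E, of \<mu>] \<mu> by (simp add: M_def less_max_iff_disj)
  have "ennreal (1 / M) * epow (ennreal D) (1 / q) \<le> ennreal A"
    using order_trans[OF triple_norm_ge_finite_block[of \<mu> \<nu>, OF \<mu> \<nu> E F] norm]
    by (simp add: M_def D_def \<alpha>_def)
  then have "ennreal ((1 / M) powr q) * ennreal D \<le> ennreal (A powr q)"
    using mult_epow_le_iff[of "1 / M" q A] \<open>M > 0\<close> \<open>0 < q\<close> \<open>0 \<le> A\<close> by simp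
  then have "D / M powr q \<le> A powr q"
    using \<open>M > 0\<close> by (simp add: ennreal_mult'[symmetric] powr_divide)
  then have DA: "D \<le> A powr q * M powr q"
    using \<open>M > 0\<close> by (simp add: field_simps)
  show "D \<le> max (A powr q * sum \<mu> E powr (1 - h)) ((A / t) powr q * sum \<nu> F powr (1 - h))"
  proof (cases "sum \<nu> F powr \<alpha> / t \<le> sum \<mu> E powr \<alpha>")
    case True
    then have "M powr q = sum \<mu> E powr (1 - h)"
      by (simp add: M_def powr_powr \<open>\<alpha> * q = 1 - h\<close>)
    then show ?thesis using DA by simp
  next
    case False
    then have "M powr q = sum \<nu> F powr (1 - h) / t powr q"
      using \<open>0 < t\<close> by (simp add: M_def powr_divide powr_powr \<open>\<alpha> * q = 1 - h\<close>)
    then have "A powr q * M powr q = (A / t) powr q * sum \<nu> F powr (1 - h)"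
      using \<open>0 < t\<close> \<open>0 \<le> A\<close> by (simp add: powr_divide)
    then show ?thesis using DA by simp
  qed
qed

lemma K_func_le_of_triple_norm_le:
  fixes \<mu> :: "'m \<Rightarrow> real" and \<nu> :: "'n \<Rightarrow> real" and a :: "'m \<Rightarrow> 'n \<Rightarrow> real"
  assumes \<mu>: "\<And>i. \<mu> i > 0" and \<nu>: "\<And>j. \<nu> j > 0" and "0 < t" "1 \<le> q" "ennreal q < p" "0 < A"
    and norm: "triple_norm \<mu> \<nu> p q t a \<le> ennreal A"
  shows "K_func \<mu> \<nu> p q t a \<le> ennreal (2 * A)"
proof -
  define h where "h = q * enn2real (inverse p)"
  have "0 \<le> h" using \<open>1 \<le> q\<close> by (simp add: h_def)
  have "0 < p" using le_less_trans[OF zero_le \<open>ennreal q < p\<close>] .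
  have "block_bound \<mu> \<nu> h (A powr q) ((A / t) powr q) (\<lambda>i j. \<bar>a i j\<bar> powr q)"
    using triple_norm_le_imp_block_bound[OF \<mu> \<nu> \<open>0 < t\<close> _ _ norm] \<open>1 \<le> q\<close> \<open>0 < A\<close>
    by (simp add: h_def)
  then have "\<exists>x. (\<forall>k. x k \<in> {0, 1}) \<and> (\<forall>R C. finite R \<longrightarrow> finite C \<longrightarrow>
      weak_split R C \<mu> \<nu> h (A powr q) ((A / t) powr q) (\<lambda>i j. \<bar>a i j\<bar> powr q) x)"
    by (rule weak_split_exists) (use \<mu> \<nu> \<open>0 \<le> h\<close> in auto)
  then obtain x where x01: "\<And>k. x k \<in> {0, 1}"
    and split: "\<And>R C. finite R \<Longrightarrow> finite C \<Longrightarrow>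
      weak_split R C \<mu> \<nu> h (A powr q) ((A / t) powr q) (\<lambda>i j. \<bar>a i j\<bar> powr q) x"
    by blast
  define b where "b i j = x (i, j) * a i j" for i j
  define c where "c i j = (1 - x (i, j)) * a i j" for i j
  have b: "\<bar>b i j\<bar> powr q = x (i, j) * \<bar>a i j\<bar> powr q"
    and c: "\<bar>c i j\<bar> powr q = (1 - x (i, j)) * \<bar>a i j\<bar> powr q" for i j
    using x01[of "(i, j)"] by (auto simp: b_def c_def)
  have norm_b: "mixed_norm \<mu> \<nu> p q b \<le> ennreal A"
    using split \<open>1 \<le> q\<close> \<open>0 < p\<close> \<open>0 < A\<close>
    by (intro mixed_norm_leI[OF \<mu> \<nu>])
      (auto simp: weak_bound_on_UNIV_iff weak_split_def b mult.assoc h_def)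
  have norm_c: "mixed_norm \<nu> \<mu> p q (\<lambda>j i. c i j) \<le> ennreal (A / t)"
    using split \<open>1 \<le> q\<close> \<open>0 < p\<close> \<open>0 < A\<close> \<open>0 < t\<close>
    by (intro mixed_norm_leI[OF \<nu> \<mu>])
      (auto simp: weak_bound_on_UNIV_iff weak_split_def c mult.assoc h_def)
  have "K_func \<mu> \<nu> p q t a \<le> mixed_norm \<mu> \<nu> p q b + ennreal t * mixed_norm \<nu> \<mu> p q (\<lambda>j i. c i j)"
    unfolding K_func_def by (rule INF_lower2[of "(b, c)"]) (auto simp: b_def c_def algebra_simps)
  also have "\<dots> \<le> ennreal A + ennreal t * ennreal (A / t)"
    using norm_b norm_c by (intro add_mono mult_left_mono) auto
  also have "\<dots> = ennreal (2 * A)"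
    using \<open>0 < A\<close> \<open>0 < t\<close> by (simp add: ennreal_mult'[symmetric] ennreal_plus[symmetric] del: ennreal_plus)
  finally show ?thesis .
qed

lemma K_func_le_twice_triple_norm:
  assumes "\<And>i. \<mu> i > 0" "\<And>j. \<nu> j > 0" "0 < t" "1 \<le> q" "ennreal q < p"
  shows "K_func \<mu> \<nu> p q t a \<le> 2 * triple_norm \<mu> \<nu> p q t a"
proof (cases "triple_norm \<mu> \<nu> p q t a")
  case (real A)
  show ?thesis
  proof (rule ennreal_le_epsilon)
    fix e :: real assume "0 < e"
    have "K_func \<mu> \<nu> p q t a \<le> ennreal (2 * (A + e / 2))"
      using real \<open>0 < e\<close> by (intro K_func_le_of_triple_norm_le[OF assms]) auto
    also have "\<dots> = ennreal (2 * A) + ennreal e"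
      using real \<open>0 < e\<close> by (subst ennreal_plus[symmetric]) (auto simp: algebra_simps)
    also have "ennreal (2 * A) = 2 * triple_norm \<mu> \<nu> p q t a"
      using real by (simp add: ennreal_mult)
    finally show "K_func \<mu> \<nu> p q t a \<le> 2 * triple_norm \<mu> \<nu> p q t a + ennreal e" .
  qed
qed simp

section \<open>The lower bound\<close>

lemma powr_add_le_convex_split:
  fixes x y l q :: real
  assumes "0 \<le> x" "0 \<le> y" "0 < l" "l < 1" "1 \<le> q"
  shows "(x + y) powr q \<le> l powr (1 - q) * x powr q + (1 - l) powr (1 - q) * y powr q"
proof -
  have ge1: "1 \<le> z powr (1 - q)" if "0 < z" "z < 1" for z :: real
    using powr_mono'[of "1 - q" 0 z] that assms(5) by simp
  consider "x = 0" | "y = 0" | "0 < x" "0 < y" using assms by linarith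
  then show ?thesis
  proof cases
    case 1
    then show ?thesis
      using ge1[of "1 - l"] assms by (simp add: mult_le_cancel_right1)
  next
    case 2
    then show ?thesis
      using ge1[of l] assms by (simp add: mult_le_cancel_right1)
  next
    case 3
    have "(x + y) powr q = ((1 - l) *\<^sub>R (y / (1 - l)) + l *\<^sub>R (x / l)) powr q"
      using assms by (simp add: add.commute)
    also have "\<dots> \<le> (1 - l) * (y / (1 - l)) powr q + l * (x / l) powr q"
      using assms 3 by (intro convex_onD[OF powr_convex]) auto
    also have "\<dots> = l powr (1 - q) * x powr q + (1 - l) powr (1 - q) * y powr q"
      using assms 3 by (simp add: powr_divide powr_diff field_simps)
    finally show ?thesis .
  qed
qed

lemma Minkowski_sum_powr_pos:
  fixes w \<beta> \<gamma> :: "'k \<Rightarrow> real"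
  assumes w: "\<And>k. w k \<ge> 0" and "1 \<le> q" "0 < P" "0 < Q"
    and \<beta>: "(\<Sum>k\<in>S. w k * \<bar>\<beta> k\<bar> powr q) \<le> P powr q"
    and \<gamma>: "(\<Sum>k\<in>S. w k * \<bar>\<gamma> k\<bar> powr q) \<le> Q powr q"
  shows "(\<Sum>k\<in>S. w k * \<bar>\<beta> k + \<gamma> k\<bar> powr q) \<le> (P + Q) powr q"
proof -
  define l where "l = P / (P + Q)"
  have "0 < l" "l < 1" "1 - l = Q / (P + Q)" using \<open>0 < P\<close> \<open>0 < Q\<close> by (auto simp: l_def field_simps)
  have "(\<Sum>k\<in>S. w k * \<bar>\<beta> k + \<gamma> k\<bar> powr q)
      \<le> (\<Sum>k\<in>S. w k * (l powr (1 - q) * \<bar>\<beta> k\<bar> powr q + (1 - l) powr (1 - q) * \<bar>\<gamma> k\<bar> powr q))"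
  proof (intro sum_mono mult_left_mono w)
    fix k
    have "\<bar>\<beta> k + \<gamma> k\<bar> powr q \<le> (\<bar>\<beta> k\<bar> + \<bar>\<gamma> k\<bar>) powr q"
      using \<open>1 \<le> q\<close> by (intro powr_mono2) auto
    also have "\<dots> \<le> l powr (1 - q) * \<bar>\<beta> k\<bar> powr q + (1 - l) powr (1 - q) * \<bar>\<gamma> k\<bar> powr q"
      using \<open>0 < l\<close> \<open>l < 1\<close> \<open>1 \<le> q\<close> by (intro powr_add_le_convex_split) auto
    finally show "\<bar>\<beta> k + \<gamma> k\<bar> powr q
        \<le> l powr (1 - q) * \<bar>\<beta> k\<bar> powr q + (1 - l) powr (1 - q) * \<bar>\<gamma> k\<bar> powr q" .
  qed
  also have "\<dots> = l powr (1 - q) * (\<Sum>k\<in>S. w k * \<bar>\<beta> k\<bar> powr q)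
      + (1 - l) powr (1 - q) * (\<Sum>k\<in>S. w k * \<bar>\<gamma> k\<bar> powr q)"
    by (simp add: sum.distrib sum_distrib_left algebra_simps)
  also have "\<dots> \<le> l powr (1 - q) * P powr q + (1 - l) powr (1 - q) * Q powr q"
    using \<beta> \<gamma> by (intro add_mono mult_left_mono) auto
  also have "\<dots> = (P + Q) * (P + Q) powr (q - 1)"
  proof -
    have ratio: "(a / (P + Q)) powr (1 - q) * a powr q = a * (P + Q) powr (q - 1)" if "0 < a" for a
      using that \<open>0 < P\<close> \<open>0 < Q\<close> by (simp add: powr_divide powr_diff divide_simps flip: powr_add)
    have "l powr (1 - q) * P powr q = P * (P + Q) powr (q - 1)"
      using ratio[OF \<open>0 < P\<close>] by (simp add: l_def)
    moreover have "(1 - l) powr (1 - q) * Q powr q = Q * (P + Q) powr (q - 1)"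
      using ratio[OF \<open>0 < Q\<close>] \<open>1 - l = _\<close> by simp
    ultimately show ?thesis by (simp add: algebra_simps)
  qed
  also have "\<dots> = (P + Q) powr q"
    using \<open>0 < P\<close> \<open>0 < Q\<close> by (simp add: powr_diff)
  finally show ?thesis .
qed

lemma Minkowski_sum_powr:
  fixes w \<beta> \<gamma> :: "'k \<Rightarrow> real"
  assumes w: "\<And>k. w k \<ge> 0" and "1 \<le> q" "0 \<le> P" "0 \<le> Q"
    and \<beta>: "(\<Sum>k\<in>S. w k * \<bar>\<beta> k\<bar> powr q) \<le> P powr q"
    and \<gamma>: "(\<Sum>k\<in>S. w k * \<bar>\<gamma> k\<bar> powr q) \<le> Q powr q"
  shows "(\<Sum>k\<in>S. w k * \<bar>\<beta> k + \<gamma> k\<bar> powr q) \<le> (P + Q) powr q"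
proof -
  define D where "D = (\<Sum>k\<in>S. w k * \<bar>\<beta> k + \<gamma> k\<bar> powr q)"
  have "D \<ge> 0" unfolding D_def using w by (simp add: sum_nonneg)
  have "D powr (1 / q) \<le> P + Q"
  proof (rule field_le_epsilon)
    fix e :: real assume "0 < e"
    have "P powr q \<le> (P + e / 2) powr q" "Q powr q \<le> (Q + e / 2) powr q"
      using \<open>0 < e\<close> \<open>0 \<le> P\<close> \<open>0 \<le> Q\<close> \<open>1 \<le> q\<close> by (auto intro!: powr_mono2)
    then have "D \<le> (P + e / 2 + (Q + e / 2)) powr q"
      unfolding D_def using \<beta> \<gamma> \<open>0 < e\<close> \<open>0 \<le> P\<close> \<open>0 \<le> Q\<close> \<open>1 \<le> q\<close>
      by (intro Minkowski_sum_powr_pos[OF w]) auto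
    then have "D powr (1 / q) \<le> ((P + Q + e) powr q) powr (1 / q)"
      using \<open>D \<ge> 0\<close> \<open>1 \<le> q\<close> by (intro powr_mono2) (auto simp: add_ac)
    then show "D powr (1 / q) \<le> P + Q + e"
      using \<open>0 < e\<close> \<open>0 \<le> P\<close> \<open>0 \<le> Q\<close> \<open>1 \<le> q\<close> by (simp add: powr_powr)
  qed
  then have "(D powr (1 / q)) powr q \<le> (P + Q) powr q"
    using \<open>1 \<le> q\<close> by (intro powr_mono2) auto
  then show ?thesis
    using \<open>D \<ge> 0\<close> \<open>1 \<le> q\<close> by (simp add: D_def powr_powr)
qed

lemma block_sum_le_of_mixed_norm_le:
  fixes \<mu> :: "'m \<Rightarrow> real" and \<nu> :: "'n \<Rightarrow> real" and p :: ennreal and q :: real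
  defines "h \<equiv> q * enn2real (inverse p)" and "\<alpha> \<equiv> 1 / q - enn2real (inverse p)"
  assumes \<mu>: "\<And>i. \<mu> i > 0" and \<nu>: "\<And>j. \<nu> j > 0" and "1 \<le> q" "ennreal q < p" "0 \<le> L"
    and "mixed_norm \<mu> \<nu> p q b \<le> ennreal L" and "finite E" "finite F" "sum \<mu> E \<le> m"
  shows "(1 - h) * (\<Sum>i\<in>E. \<Sum>j\<in>F. \<bar>b i j\<bar> powr q * \<mu> i * \<nu> j) \<le> (L * m powr \<alpha>) powr q"
proof -
  have "0 < p" using le_less_trans[OF zero_le \<open>ennreal q < p\<close>] .
  have "h < 1" using mult_enn2real_inverse_less_one[OF \<open>1 \<le> q\<close> \<open>ennreal q < p\<close>] by (simp add: h_def)
  have "\<alpha> * q = 1 - h" using \<open>1 \<le> q\<close> by (simp add: \<alpha>_def h_def field_simps)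
  have "0 \<le> sum \<mu> E" using \<mu>[THEN less_imp_le] by (simp add: sum_nonneg)
  have "(\<Sum>i\<in>E. \<Sum>j\<in>F. \<bar>b i j\<bar> powr q * \<mu> i * \<nu> j) = (\<Sum>i\<in>E. \<mu> i * (\<Sum>j\<in>F. \<bar>b i j\<bar> powr q * \<nu> j))"
    by (simp add: sum_distrib_left mult_ac)
  also have "\<dots> \<le> L powr q * sum \<mu> E powr (1 - h) / (1 - h)"
  proof (rule sum_mult_le_of_weak_bound_on[OF \<mu>])
    show "weak_bound_on UNIV \<mu> h (L powr q) (\<lambda>i. \<Sum>j\<in>F. \<bar>b i j\<bar> powr q * \<nu> j)"
      using mixed_norm_leD[of \<mu> \<nu>, OF \<mu> \<nu> _ \<open>0 < p\<close> \<open>0 \<le> L\<close>] assms(5,8,10) by (simp add: h_def)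
  qed (use assms(5,9) \<open>h < 1\<close> \<nu>[THEN less_imp_le] in \<open>auto intro: sum_nonneg simp: h_def\<close>)
  also have "\<dots> \<le> L powr q * m powr (1 - h) / (1 - h)"
    using \<open>sum \<mu> E \<le> m\<close> \<open>0 \<le> sum \<mu> E\<close> \<open>h < 1\<close>
    by (intro divide_right_mono mult_left_mono powr_mono2) auto
  also have "L powr q * m powr (1 - h) = (L * m powr \<alpha>) powr q"
    using \<open>0 \<le> L\<close> \<open>\<alpha> * q = 1 - h\<close> by (simp add: powr_mult powr_powr)
  finally show ?thesis using \<open>h < 1\<close> by (simp add: field_simps)
qed

lemma set_nn_integral_le_of_mixed_norms:
  fixes \<mu> :: "'m \<Rightarrow> real" and \<nu> :: "'n \<Rightarrow> real" and a b c :: "'m \<Rightarrow> 'n \<Rightarrow> real"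
    and p :: ennreal and q :: real
  defines "h \<equiv> q * enn2real (inverse p)" and "\<alpha> \<equiv> 1 / q - enn2real (inverse p)"
  assumes \<mu>: "\<And>i. \<mu> i > 0" and \<nu>: "\<And>j. \<nu> j > 0" and "1 \<le> q" "ennreal q < p"
    and ab: "\<And>i j. a i j = b i j + c i j"
    and "0 \<le> lb" and lb: "mixed_norm \<mu> \<nu> p q b \<le> ennreal lb"
    and "0 \<le> lc" and lc: "mixed_norm \<nu> \<mu> p q (\<lambda>j i. c i j) \<le> ennreal lc"
    and "0 \<le> mE" and mE: "emeasure (disc_measure \<mu>) E \<le> ennreal mE"
    and "0 \<le> nF" and nF: "emeasure (disc_measure \<nu>) F \<le> ennreal nF"
  shows "(\<integral>\<^sup>+i\<in>E. (\<integral>\<^sup>+j\<in>F. ennreal (\<bar>a i j\<bar> powr q) \<partial>disc_measure \<nu>) \<partial>disc_measure \<mu>)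
    \<le> ennreal ((lb * mE powr \<alpha> + lc * nF powr \<alpha>) powr q / (1 - h))"
proof (rule set_nn_integral_disc_measure_iterated_le)
  fix E' F' assume E': "finite E'" "E' \<subseteq> E" and F': "finite F'" "F' \<subseteq> F"
  have "h < 1" using mult_enn2real_inverse_less_one[OF \<open>1 \<le> q\<close> \<open>ennreal q < p\<close>] by (simp add: h_def)
  have "sum \<mu> E' \<le> mE" "sum \<nu> F' \<le> nF"
    using sum_le_emeasure_disc_measure[OF E', of \<mu>] sum_le_emeasure_disc_measure[OF F', of \<nu>]
      \<mu> \<nu> mE nF \<open>0 \<le> mE\<close> \<open>0 \<le> nF\<close> by (auto simp: less_imp_le dest: order_trans)
  define w where "w k = (1 - h) * (\<mu> (fst k) * \<nu> (snd k))" for k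
  have double_sum: "(\<Sum>k\<in>E' \<times> F'. w k * f (fst k) (snd k))
      = (1 - h) * (\<Sum>i\<in>E'. \<Sum>j\<in>F'. f i j * \<mu> i * \<nu> j)" for f
    by (simp add: w_def sum.cartesian_product sum_distrib_left split_def mult_ac)
  have "(\<Sum>k\<in>E' \<times> F'. w k * \<bar>b (fst k) (snd k) + c (fst k) (snd k)\<bar> powr q)
      \<le> (lb * mE powr \<alpha> + lc * nF powr \<alpha>) powr q"
  proof (rule Minkowski_sum_powr)
    show "(\<Sum>k\<in>E' \<times> F'. w k * \<bar>b (fst k) (snd k)\<bar> powr q) \<le> (lb * mE powr \<alpha>) powr q"
      using block_sum_le_of_mixed_norm_le[OF \<mu> \<nu> \<open>1 \<le> q\<close> \<open>ennreal q < p\<close> \<open>0 \<le> lb\<close> lb E'(1) F'(1)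
          \<open>sum \<mu> E' \<le> mE\<close>]
      by (simp add: double_sum[of "\<lambda>i j. \<bar>b i j\<bar> powr q"] h_def \<alpha>_def)
    show "(\<Sum>k\<in>E' \<times> F'. w k * \<bar>c (fst k) (snd k)\<bar> powr q) \<le> (lc * nF powr \<alpha>) powr q"
      using block_sum_le_of_mixed_norm_le[OF \<nu> \<mu> \<open>1 \<le> q\<close> \<open>ennreal q < p\<close> \<open>0 \<le> lc\<close> lc F'(1) E'(1)
          \<open>sum \<nu> F' \<le> nF\<close>]
      by (simp add: double_sum[of "\<lambda>i j. \<bar>c i j\<bar> powr q"] sum.swap[of _ F'] h_def \<alpha>_def mult_ac)
  qed (use \<open>1 \<le> q\<close> \<open>h < 1\<close> \<open>0 \<le> lb\<close> \<open>0 \<le> lc\<close> \<mu> \<nu> in \<open>auto simp: w_def less_imp_le\<close>)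
  then have "(1 - h) * (\<Sum>i\<in>E'. \<Sum>j\<in>F'. \<bar>a i j\<bar> powr q * \<mu> i * \<nu> j)
      \<le> (lb * mE powr \<alpha> + lc * nF powr \<alpha>) powr q"
    using double_sum[of "\<lambda>i j. \<bar>a i j\<bar> powr q"] by (simp add: ab)
  then show "(\<Sum>i\<in>E'. \<Sum>j\<in>F'. \<bar>a i j\<bar> powr q * \<mu> i * \<nu> j)
      \<le> (lb * mE powr \<alpha> + lc * nF powr \<alpha>) powr q / (1 - h)"
    using \<open>h < 1\<close> by (simp add: field_simps)
qed (use \<mu> \<nu> in \<open>auto simp: less_imp_le\<close>)

lemma add_mult_le_max_mult:
  fixes x y lb lc t :: real
  assumes "0 \<le> lb" "0 \<le> lc" "0 < t"
  shows "lb * x + lc * y \<le> (lb + t * lc) * max x (y / t)"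
proof -
  have "t * (y / t) \<le> t * max x (y / t)" using \<open>0 < t\<close> by (intro mult_left_mono) auto
  then have "lc * y \<le> lc * (t * max x (y / t))" using assms by (simp add: mult_left_mono)
  moreover have "lb * x \<le> lb * max x (y / t)" using assms by (simp add: mult_left_mono)
  ultimately show ?thesis by (simp add: algebra_simps)
qed

lemma triple_norm_term_le_mixed_norms:
  fixes \<mu> :: "'m \<Rightarrow> real" and \<nu> :: "'n \<Rightarrow> real" and a b c :: "'m \<Rightarrow> 'n \<Rightarrow> real"
  assumes \<mu>: "\<And>i. \<mu> i > 0" and \<nu>: "\<And>j. \<nu> j > 0" and "0 < t" "1 \<le> q" "ennreal q < p"
    and ab: "\<And>i j. a i j = b i j + c i j"
    and E: "0 < emeasure (disc_measure \<mu>) E" "emeasure (disc_measure \<mu>) E < \<infinity>"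
    and F: "0 < emeasure (disc_measure \<nu>) F" "emeasure (disc_measure \<nu>) F < \<infinity>"
  shows "ennreal ((1 - q * enn2real (inverse p)) powr (1 / q)) *
      (ennreal (1 / max (measure (disc_measure \<mu>) E powr (1 / q - enn2real (inverse p)))
                        (measure (disc_measure \<nu>) F powr (1 / q - enn2real (inverse p)) / t))
       * epow (\<integral>\<^sup>+ i\<in>E. (\<integral>\<^sup>+ j\<in>F. ennreal (\<bar>a i j\<bar> powr q) \<partial>disc_measure \<nu>) \<partial>disc_measure \<mu>) (1 / q))
    \<le> mixed_norm \<mu> \<nu> p q b + ennreal t * mixed_norm \<nu> \<mu> p q (\<lambda>j i. c i j)"
proof (cases "mixed_norm \<mu> \<nu> p q b = \<infinity> \<or> mixed_norm \<nu> \<mu> p q (\<lambda>j i. c i j) = \<infinity>")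
  case True
  then show ?thesis using \<open>0 < t\<close> by (auto simp: ennreal_mult_top)
next
  case False
  then obtain lb lc where "0 \<le> lb" and lb: "mixed_norm \<mu> \<nu> p q b = ennreal lb"
    and "0 \<le> lc" and lc: "mixed_norm \<nu> \<mu> p q (\<lambda>j i. c i j) = ennreal lc"
    by (metis ennreal_cases infinity_ennreal_def)
  define h where "h = q * enn2real (inverse p)"
  define \<alpha> where "\<alpha> = 1 / q - enn2real (inverse p)"
  define mE where "mE = measure (disc_measure \<mu>) E"
  define nF where "nF = measure (disc_measure \<nu>) F"
  have emE: "emeasure (disc_measure \<mu>) E = ennreal mE" and enF: "emeasure (disc_measure \<nu>) F = ennreal nF"
    using E F by (simp_all add: mE_def nF_def emeasure_eq_ennreal_measure)
  then have "0 < mE" "0 < nF" using E F by auto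
  define I where "I = (\<integral>\<^sup>+ i\<in>E. (\<integral>\<^sup>+ j\<in>F. ennreal (\<bar>a i j\<bar> powr q) \<partial>disc_measure \<nu>) \<partial>disc_measure \<mu>)"
  define S where "S = lb * mE powr \<alpha> + lc * nF powr \<alpha>"
  define M where "M = max (mE powr \<alpha>) (nF powr \<alpha> / t)"
  define C where "C = (1 - h) powr (1 / q)"
  have "h < 1" using mult_enn2real_inverse_less_one[OF \<open>1 \<le> q\<close> \<open>ennreal q < p\<close>] by (simp add: h_def)
  have "0 < M" using \<open>0 < mE\<close> by (simp add: M_def less_max_iff_disj)
  have "0 < C" "C powr q = 1 - h" using \<open>h < 1\<close> \<open>1 \<le> q\<close> by (simp_all add: C_def powr_powr)
  have "0 \<le> S" using \<open>0 \<le> lb\<close> \<open>0 \<le> lc\<close> by (simp add: S_def)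
  have "S \<le> (lb + t * lc) * M"
    unfolding S_def M_def using \<open>0 \<le> lb\<close> \<open>0 \<le> lc\<close> \<open>0 < t\<close> by (rule add_mult_le_max_mult)
  have "I \<le> ennreal (S powr q / (1 - h))"
    unfolding I_def S_def h_def \<alpha>_def
    using \<open>0 \<le> lb\<close> \<open>0 \<le> lc\<close> lb lc emE enF \<open>0 < mE\<close> \<open>0 < nF\<close>
    by (intro set_nn_integral_le_of_mixed_norms[OF \<mu> \<nu> \<open>1 \<le> q\<close> \<open>ennreal q < p\<close> ab]) auto
  then have "ennreal ((C / M) powr q) * I \<le> ennreal ((C / M) powr q) * ennreal (S powr q / (1 - h))"
    by (rule mult_left_mono) simp
  also have "\<dots> = ennreal ((S / M) powr q)"
    using \<open>0 < C\<close> \<open>0 < M\<close> \<open>0 \<le> S\<close> \<open>h < 1\<close> \<open>C powr q = 1 - h\<close>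
    by (simp add: ennreal_mult'[symmetric] powr_divide)
  also have "\<dots> \<le> ennreal ((lb + t * lc) powr q)"
    using \<open>S \<le> (lb + t * lc) * M\<close> \<open>0 < M\<close> \<open>0 \<le> S\<close> \<open>1 \<le> q\<close>
    by (intro ennreal_leI powr_mono2) (auto simp: divide_le_eq)
  finally have "ennreal (C / M) * epow I (1 / q) \<le> ennreal (lb + t * lc)"
    using mult_epow_le_iff[of "C / M" q "lb + t * lc" I] \<open>0 < C\<close> \<open>0 < M\<close> \<open>1 \<le> q\<close> \<open>0 \<le> lb\<close> \<open>0 \<le> lc\<close> \<open>0 < t\<close>
    by simp
  then show ?thesis
    using \<open>0 < C\<close> \<open>0 < M\<close> \<open>0 \<le> lb\<close> \<open>0 \<le> lc\<close> \<open>0 < t\<close> lb lc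
    by (simp add: C_def M_def I_def h_def \<alpha>_def mE_def nF_def ennreal_mult'[symmetric]
        mult.assoc[symmetric])
qed

lemma triple_norm_le_K_func:
  assumes \<mu>: "\<And>i. \<mu> i > 0" and \<nu>: "\<And>j. \<nu> j > 0" and "0 < t" "1 \<le> q" "ennreal q < p"
  shows "ennreal ((1 - q * enn2real (inverse p)) powr (1 / q)) * triple_norm \<mu> \<nu> p q t a
    \<le> K_func \<mu> \<nu> p q t a"
  unfolding K_func_def
proof (rule INF_greatest)
  fix bc assume "bc \<in> {(b, c). \<forall>i j. a i j = b i j + c i j}"
  then obtain b c where bc: "bc = (b, c)" and ab: "\<And>i j. a i j = b i j + c i j" by auto
  show "ennreal ((1 - q * enn2real (inverse p)) powr (1 / q)) * triple_norm \<mu> \<nu> p q t a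
      \<le> mixed_norm \<mu> \<nu> p q (fst bc) + ennreal t * mixed_norm \<nu> \<mu> p q (\<lambda>j i. snd bc i j)"
    unfolding triple_norm_def Let_def SUP_mult_left_ennreal bc fst_conv snd_conv
    by (rule SUP_least) (auto intro!: triple_norm_term_le_mixed_norms[OF \<mu> \<nu> assms(3-5) ab])
qed

theorem theorem2p7:
  fixes \<mu> :: "'m \<Rightarrow> real" and \<nu> :: "'n \<Rightarrow> real"
    and p :: ennreal and q t :: real and a :: "'m \<Rightarrow> 'n \<Rightarrow> real"
  assumes "\<And>i. \<mu> i > 0" and "\<And>j. \<nu> j > 0"
    and "t > 0" and "1 \<le> q" and "ennreal q < p"
  shows "ennreal ((1 - q * enn2real (inverse p)) powr (1 / q)) * triple_norm \<mu> \<nu> p q t a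
           \<le> K_func \<mu> \<nu> p q t a
         \<and> K_func \<mu> \<nu> p q t a \<le> 2 * triple_norm \<mu> \<nu> p q t a"
  using triple_norm_le_K_func[of \<mu> \<nu>, OF assms] K_func_le_twice_triple_norm[of \<mu> \<nu>, OF assms]
  by blast

end
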